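(* Let $\mathcal N=(\mathcal L,\mathcal I,D_{\mathcal L})$ be a network (with a general collision profile) of character $D^*$. (i) If $S$ is a collision-free framed schedule of frame length $T_F\ge 3D^*+1$ whose rate vector $R_S$ exists, then $R_S\in(1-D^*/T_F)\,\widetilde{\mathcal R}^{(\mathcal L,\mathcal I)}$, and hence $R_S\in\widetilde{\mathcal R}^{(\mathcal L,\mathcal I)}$. (ii) For every $R\in\widetilde{\mathcal R}^{(\mathcal L,\mathcal I)}$ and every $\epsilon>0$ there exist a frame length $T_F$ and a collision-free framed schedule $S$ of frame length $T_F$ whose rate vector exists and satisfies $R_S(l)\ge R(l)-\epsilon$ for all $l$.
   Context: A network is a triple $\mathcal N=(\mathcal L,\mathcal I,D_{\mathcal L})$ where $\mathcal L$ is a finite nonempty set of links, each $\mathcal I(l)$ is a collection of nonempty subsets of $\mathcal L$, and $D_{\mathcal L}$ assigns an integer $D_{\mathcal L}(l,l')$ to every pair with $l'\in\phi$ for some $\phi\in\mathcal I(l)$. The character is $D^*=\max_{l}\max_{\phi\in\mathcal I(l)}\max_{l'\in\phi}|D_{\mathcal L}(l,l')|$ (0 if there are no collision sets). A schedule is a map $S:\mathcal L\times\mathbb Z\to\{0,1\}$; $S(l,t)$ has a collision if there is $\phi\in\mathcal I(l)$ with $S(l',t+D_{\mathcal L}(l,l'))=1$ for all $l'\in\phi$; $S$ is collision free if no $(l,t)$ with $S(l,t)=1$ has a collision. $R_S(l)=\lim_{T\to\infty}\frac1T\sum_{t=0}^{T-1}\iota\big(S(l,t)=1\text{ and collision free}\big)$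 when the limit exists; $R_S=(R_S(l))_l$ is the rate vector when all limits exist. For an integer $T_F\ge D^*+1$, a framed schedule of frame length $T_F$ is a schedule $S$ with $S(l,t)=0$ for $t<0$, such that for every $k\ge0$ and every $l$: $S(l,kT_F+i)=0$ for $i=T_F-D^*,\dots,T_F-1$, and the values $S(l,kT_F+i)$, $i=0,\dots,T_F-D^*-1$, are all equal. An independent set of $(\mathcal L,\mathcal I)$ is a subset $A\subseteq\mathcal L$ such that there are no $l\in A$ and $\phi\in\mathcal I(l)$ with $\phi\subseteq A$; $\widetilde{\mathcal R}^{(\mathcal L,\mathcal I)}$ is the convex hull of the indicator vectors (in $\mathbb R^{\mathcal L}$) of all independent sets of $(\mathcal L,\mathcal I)$. *)

theory Defs
  imports "HOL-Analysis.Analysis"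
begin

text \<open>The collision profile I maps each link to a collection of subsets of links;
  D is the offset function (values outside collision sets are irrelevant).
  Schedules are maps 'l => int => bool (True meaning value 1).\<close>

definition network :: "('l::finite \<Rightarrow> 'l set set) \<Rightarrow> bool" where
  "network I \<longleftrightarrow> (\<forall>l. \<forall>\<phi>\<in>I l. \<phi> \<noteq> {})"

definition character :: "('l::finite \<Rightarrow> 'l set set) \<Rightarrow> ('l \<Rightarrow> 'l \<Rightarrow> int) \<Rightarrow> int" where
  "character I D = Max ({0} \<union> {\<bar>D l l'\<bar> | l \<phi> l'. \<phi> \<in> I l \<and> l' \<in> \<phi>})"

definition collision :: "('l \<Rightarrow> 'l set set) \<Rightarrow> ('l \<Rightarrow> 'l \<Rightarrow> int) \<Rightarrow> ('l \<Rightarrow> int \<Rightarrow> bool) \<Rightarrow> 'l \<Rightarrow> int \<Rightarrow> bool" where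
  "collision I D S l t \<longleftrightarrow> (\<exists>\<phi>\<in>I l. \<forall>l'\<in>\<phi>. S l' (t + D l l'))"

definition collision_free :: "('l \<Rightarrow> 'l set set) \<Rightarrow> ('l \<Rightarrow> 'l \<Rightarrow> int) \<Rightarrow> ('l \<Rightarrow> int \<Rightarrow> bool) \<Rightarrow> bool" where
  "collision_free I D S \<longleftrightarrow> (\<forall>l t. S l t \<longrightarrow> \<not> collision I D S l t)"

definition avg_rate :: "('l \<Rightarrow> 'l set set) \<Rightarrow> ('l \<Rightarrow> 'l \<Rightarrow> int) \<Rightarrow> ('l \<Rightarrow> int \<Rightarrow> bool) \<Rightarrow> 'l \<Rightarrow> nat \<Rightarrow> real" where
  "avg_rate I D S l T =
     (\<Sum>t<T. if S l (int t) \<and> \<not> collision I D S l (int t) then 1 else 0) / real T"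

definition is_rate_vector :: "('l \<Rightarrow> 'l set set) \<Rightarrow> ('l \<Rightarrow> 'l \<Rightarrow> int) \<Rightarrow> ('l \<Rightarrow> int \<Rightarrow> bool) \<Rightarrow> ('l \<Rightarrow> real) \<Rightarrow> bool" where
  "is_rate_vector I D S R \<longleftrightarrow> (\<forall>l. avg_rate I D S l \<longlonglongrightarrow> R l)"

definition framed_schedule :: "('l::finite \<Rightarrow> 'l set set) \<Rightarrow> ('l \<Rightarrow> 'l \<Rightarrow> int) \<Rightarrow> int \<Rightarrow> ('l \<Rightarrow> int \<Rightarrow> bool) \<Rightarrow> bool" where
  "framed_schedule I D TF S \<longleftrightarrow>
     TF \<ge> character I D + 1 \<and>
     (\<forall>l t. t < 0 \<longrightarrow> \<not> S l t) \<and>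
     (\<forall>k::nat. \<forall>l.
        (\<forall>i. TF - character I D \<le> i \<and> i \<le> TF - 1 \<longrightarrow> \<not> S l (int k * TF + i)) \<and>
        (\<forall>i j. 0 \<le> i \<and> i \<le> TF - character I D - 1 \<and> 0 \<le> j \<and> j \<le> TF - character I D - 1
               \<longrightarrow> S l (int k * TF + i) = S l (int k * TF + j)))"

definition independent_set :: "('l \<Rightarrow> 'l set set) \<Rightarrow> 'l set \<Rightarrow> bool" where
  "independent_set I A \<longleftrightarrow> \<not> (\<exists>l\<in>A. \<exists>\<phi>\<in>I l. \<phi> \<subseteq> A)"

definition indicator_vec :: "'l::finite set \<Rightarrow> real ^ 'l" where
  "indicator_vec A = (\<chi> l. if l \<in> A then 1 else 0)"

definition rate_region :: "('l::finite \<Rightarrow> 'l set set) \<Rightarrow> (real ^ 'l) set" where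
  "rate_region I = convex hull {indicator_vec A | A. independent_set I A}"

end

theory Submission
  imports Defs
begin

text \<open>(i) In a collision-free framed schedule with \<open>TF \<ge> 3D\<^sup>* + 1\<close> the links transmitting in a
  frame form an independent set, and each frame contributes \<open>TF - D\<^sup>*\<close> successful slots. Hence
  \<open>R\<^sub>S\<close> is \<open>1 - D\<^sup>*/TF\<close> times a limit of averages of indicator vectors of independent sets,
  which lies in the compact convex region; scaling by a factor in \<open>[0,1]\<close> stays inside because
  the region contains \<open>0\<close>.
  (ii) Write \<open>R\<close> as a convex combination of independent sets, round the weights down to multiples
  of \<open>1/N\<close>, and let successive frames run periodically through the resulting list of sets. The
  rate is the rounded combination scaled by \<open>1 - D\<^sup>*/TF\<close>, so both losses are small for large
  \<open>N\<close> and \<open>TF\<close>.\<close>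

lemma finite_offsets: "finite {\<bar>D l l'\<bar> | l \<phi> l'. \<phi> \<in> (I::'l::finite \<Rightarrow> 'l set set) l \<and> l' \<in> \<phi>}"
  by (rule finite_subset[of _ "(\<lambda>(l, l'). \<bar>D l l'\<bar>) ` UNIV"]) auto

lemma character_nonneg: "0 \<le> character I D"
  unfolding character_def using finite_offsets[of D I] by (intro Max_ge) auto

lemma abs_offset_le_character: "\<phi> \<in> I l \<Longrightarrow> l' \<in> \<phi> \<Longrightarrow> \<bar>D l l'\<bar> \<le> character I D"
  unfolding character_def using finite_offsets[of D I] by (intro Max_ge) auto

lemma framed_schedule_slot:
  assumes F: "framed_schedule I D TF S" and "0 \<le> i" "i < TF"
  shows "S l (int k * TF + i) \<longleftrightarrow> i < TF - character I D \<and> S l (int k * TF)"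
proof (cases "i < TF - character I D")
  case True
  then have "S l (int k * TF + i) = S l (int k * TF + 0)"
    using F \<open>0 \<le> i\<close> unfolding framed_schedule_def by (smt (verit))
  with True show ?thesis by simp
next
  case False
  with F \<open>i < TF\<close> show ?thesis unfolding framed_schedule_def by auto
qed

lemma framed_schedule_frame_count:
  assumes F: "framed_schedule I D TF S"
  shows "(\<Sum>i<nat TF. if S l (int (k * nat TF + i)) then 1 else 0 :: real)
       = real_of_int (TF - character I D) * (if S l (int k * TF) then 1 else 0)"
proof -
  have TF: "character I D + 1 \<le> TF" "0 \<le> character I D"
    using F character_nonneg unfolding framed_schedule_def by auto
  have active: "{..<nat TF} \<inter> {i. i < nat (TF - character I D)} = {..<nat (TF - character I D)}"
    using TF by auto
  have "(\<Sum>i<nat TF. if S l (int (k * nat TF + i)) then 1 else 0 :: real)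
      = (\<Sum>i<nat TF. if i < nat (TF - character I D) \<and> S l (int k * TF) then 1 else 0)"
  proof (rule sum.cong[OF refl])
    fix i assume "i \<in> {..<nat TF}"
    moreover have "int (k * nat TF + i) = int k * TF + int i" using TF by simp
    ultimately show "(if S l (int (k * nat TF + i)) then 1 else 0 :: real) =
      (if i < nat (TF - character I D) \<and> S l (int k * TF) then 1 else 0)"
      using framed_schedule_slot[OF F, of "int i" l k] by auto
  qed
  also have "\<dots> = real (card {..<nat (TF - character I D)}) * (if S l (int k * TF) then 1 else 0)"
    using TF active by (simp add: sum.If_cases flip: of_nat_sum)
  finally show ?thesis using TF by simp
qed

lemma framed_schedule_count:
  assumes F: "framed_schedule I D TF S"
  shows "(\<Sum>t<K * nat TF. if S l (int t) then 1 else 0 :: real)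
       = real_of_int (TF - character I D) * (\<Sum>k<K. if S l (int k * TF) then 1 else 0)"
proof -
  have "(\<Sum>t<K * nat TF. if S l (int t) then 1 else 0 :: real)
     = (\<Sum>k<K. \<Sum>t\<in>{k * nat TF..<k * nat TF + nat TF}. if S l (int t) then 1 else 0)"
    by (rule sum.nat_group[symmetric])
  also have "\<dots> = (\<Sum>k<K. \<Sum>i<nat TF. if S l (int (k * nat TF + i)) then 1 else 0)"
  proof (rule sum.cong[OF refl])
    fix k
    have block: "{k * nat TF..<k * nat TF + nat TF} = {0 + k * nat TF..<nat TF + k * nat TF}"
      by (simp add: add.commute)
    show "(\<Sum>t\<in>{k * nat TF..<k * nat TF + nat TF}. if S l (int t) then 1 else 0 :: real)
       = (\<Sum>i<nat TF. if S l (int (k * nat TF + i)) then 1 else 0)"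
      unfolding block sum.atLeastLessThan_shift_bounds by (simp add: lessThan_atLeast0 comp_def)
  qed
  also have "\<dots> = (\<Sum>k<K. real_of_int (TF - character I D) * (if S l (int k * TF) then 1 else 0))"
    by (intro sum.cong refl framed_schedule_frame_count[OF F])
  finally show ?thesis by (simp add: sum_distrib_left)
qed

lemma collision_free_avg_rate:
  "collision_free I D S \<Longrightarrow> avg_rate I D S l T = (\<Sum>t<T. if S l (int t) then 1 else 0) / real T"
  unfolding avg_rate_def collision_free_def by (intro arg_cong2[where f="(/)"] sum.cong) auto

definition frequency :: "(nat \<Rightarrow> 'l set) \<Rightarrow> nat \<Rightarrow> 'l \<Rightarrow> real" where
  "frequency g K l = (\<Sum>k<K. if l \<in> g k then 1 else 0) / real K"

lemma framed_avg_rate_after_frames: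
  assumes F: "framed_schedule I D TF S" and CF: "collision_free I D S"
  shows "avg_rate I D S l (K * nat TF)
       = (1 - real_of_int (character I D) / real_of_int TF) * frequency (\<lambda>k. {l. S l (int k * TF)}) K l"
proof -
  have "0 < TF" using F character_nonneg[of I D] unfolding framed_schedule_def by linarith
  then show ?thesis
    unfolding collision_free_avg_rate[OF CF] framed_schedule_count[OF F] frequency_def
    by (simp add: field_simps)
qed

lemma compact_rate_region: "compact (rate_region I)"
proof -
  have "{indicator_vec A | A. independent_set I A} = indicator_vec ` {A. independent_set I A}"
    by blast
  then show ?thesis
    unfolding rate_region_def by (simp add: compact_convex_hull finite_imp_compact)
qed

lemma convex_rate_region: "convex (rate_region I)"
  unfolding rate_region_def by (rule convex_convex_hull)

lemma indicator_vec_in_rate_region: "independent_set I A \<Longrightarrow> indicator_vec A \<in> rate_region I"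
  unfolding rate_region_def by (rule hull_inc) blast

lemma zero_in_rate_region: "0 \<in> rate_region I"
proof -
  have "independent_set I {}" unfolding independent_set_def by simp
  moreover have "indicator_vec {} = 0" unfolding indicator_vec_def by (simp add: vec_eq_iff)
  ultimately show ?thesis using indicator_vec_in_rate_region by metis
qed

lemma scaled_rate_region_subset:
  assumes "0 \<le> q" "q \<le> 1"
  shows "(\<lambda>x. q *\<^sub>R x) ` rate_region I \<subseteq> rate_region I"
  using convexD[OF convex_rate_region _ zero_in_rate_region, where u=q and v="1 - q"] assms by auto

lemma frequency_vec_in_rate_region:
  assumes "\<And>k. k < K \<Longrightarrow> independent_set I (g k)"
  shows "(\<chi> l. frequency g K l) \<in> rate_region I"
proof (cases "K = 0")
  case True
  then show ?thesis using zero_in_rate_region by (simp add: frequency_def vec_eq_iff flip: zero_vec_def)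
next
  case False
  have "(\<chi> l. frequency g K l) = (\<Sum>k<K. (1 / real K) *\<^sub>R indicator_vec (g k))"
    by (simp add: vec_eq_iff frequency_def indicator_vec_def sum_divide_distrib)
  also have "\<dots> \<in> rate_region I"
    using False assms by (intro convex_sum convex_rate_region indicator_vec_in_rate_region) auto
  finally show ?thesis .
qed

text \<open>If link \<open>l\<close> transmits in frame \<open>k\<close> together with a whole collision set \<open>\<phi>\<close>, then
  its slot \<open>k TF + D\<^sup>*\<close> collides: every offset slot lies in \<open>[k TF, k TF + 2D\<^sup>*]\<close>, which is inside
  the active part of the frame because \<open>TF \<ge> 3D\<^sup>* + 1\<close>.\<close>

lemma frame_transmitters_independent:
  assumes F: "framed_schedule I D TF S" and TF: "3 * character I D + 1 \<le> TF"
    and CF: "collision_free I D S"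
  shows "independent_set I {l. S l (int k * TF)}"
  unfolding independent_set_def
proof
  assume "\<exists>l\<in>{l. S l (int k * TF)}. \<exists>\<phi>\<in>I l. \<phi> \<subseteq> {l. S l (int k * TF)}"
  then obtain l \<phi> where l: "S l (int k * TF)" and \<phi>: "\<phi> \<in> I l" "\<phi> \<subseteq> {l. S l (int k * TF)}"
    by blast
  define c where "c = character I D"
  have c: "0 \<le> c" unfolding c_def by (rule character_nonneg)
  have "S l (int k * TF + c)"
    using framed_schedule_slot[OF F, of c l k] l c TF unfolding c_def by auto
  moreover have "collision I D S l (int k * TF + c)"
    unfolding collision_def
  proof (intro bexI[OF _ \<phi>(1)] ballI)
    fix l' assume "l' \<in> \<phi>"
    then have "\<bar>D l l'\<bar> \<le> c" "S l' (int k * TF)"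
      using abs_offset_le_character[of \<phi> I l l' D] \<phi> unfolding c_def by auto
    then show "S l' (int k * TF + c + D l l')"
      using framed_schedule_slot[OF F, of "c + D l l'" l' k] TF unfolding c_def by (simp add: add.assoc)
  qed
  ultimately show False using CF unfolding collision_free_def by blast
qed

lemma framed_rate_vector_in_scaled_rate_region:
  assumes F: "framed_schedule I D TF S" and TF: "3 * character I D + 1 \<le> TF"
    and CF: "collision_free I D S" and RV: "is_rate_vector I D S R"
  shows "(\<chi> l. R l) \<in> (\<lambda>x. (1 - real_of_int (character I D) / real_of_int TF) *\<^sub>R x) ` rate_region I"
proof -
  define q where "q = 1 - real_of_int (character I D) / real_of_int TF"
  have "0 < TF" "character I D < TF" using TF character_nonneg[of I D] by linarith+
  then have "0 < q" unfolding q_def by (simp add: field_simps)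
  define A where "A k = {l. S l (int k * TF)}" for k
  have lim: "(\<lambda>K. frequency A K l) \<longlonglongrightarrow> R l / q" for l
  proof -
    have "strict_mono (\<lambda>K. K * nat TF)" using \<open>0 < TF\<close> by (intro strict_monoI) simp
    then have "(\<lambda>K. avg_rate I D S l (K * nat TF)) \<longlonglongrightarrow> R l"
      using LIMSEQ_subseq_LIMSEQ[of "avg_rate I D S l"] RV unfolding is_rate_vector_def comp_def
      by blast
    then have "(\<lambda>K. q * frequency A K l) \<longlonglongrightarrow> R l"
      unfolding framed_avg_rate_after_frames[OF F CF] A_def q_def .
    then have "(\<lambda>K. q * frequency A K l / q) \<longlonglongrightarrow> R l / q"
      by (intro tendsto_divide tendsto_const) (use \<open>0 < q\<close> in auto)
    then show ?thesis using \<open>0 < q\<close> by simp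
  qed
  have freq_lim: "(\<lambda>K. \<chi> l. frequency A K l) \<longlonglongrightarrow> (\<chi> l. R l / q)"
    by (rule vec_tendstoI) (simp add: lim)
  have freq_in: "(\<chi> l. frequency A K l) \<in> rate_region I" for K
    using frame_transmitters_independent[OF F TF CF] unfolding A_def
    by (intro frequency_vec_in_rate_region)
  have "(\<chi> l. R l / q) \<in> rate_region I"
    using closed_sequentially[OF compact_imp_closed[OF compact_rate_region] freq_in freq_lim] .
  moreover have "(\<chi> l. R l) = q *\<^sub>R (\<chi> l. R l / q)"
    using \<open>0 < q\<close> by (simp add: vec_eq_iff)
  ultimately show ?thesis unfolding q_def by blast
qed

lemma periodic_avg_tendsto:
  fixes f :: "nat \<Rightarrow> real"
  assumes "0 < p" and periodic: "\<And>t. f (t + p) = f t"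
  shows "(\<lambda>T. (\<Sum>t<T. f t) / real T) \<longlonglongrightarrow> (\<Sum>t<p. f t) / real p"
proof -
  define s where "s = (\<Sum>t<p. f t)"
  have period_sum: "(\<Sum>t<T + p. f t) = (\<Sum>t<T. f t) + s" for T
    by (induction T) (simp_all add: s_def periodic)
  define h where "h T = (\<Sum>t<T. f t) - real T * s / real p" for T
  have "h (T + k * p) = h T" for T k
  proof (induction k)
    case (Suc k)
    have "h (T + k * p + p) = h (T + k * p)"
      unfolding h_def period_sum using \<open>0 < p\<close> by (simp add: field_simps)
    then show ?case using Suc by (simp add: algebra_simps)
  qed simp
  then have h_mod: "h T = h (T mod p)" for T
    using mod_div_mult_eq[of T p] by metis
  define B where "B = (\<Sum>t<p. \<bar>h t\<bar>)"
  have "\<bar>h T\<bar> \<le> B" for T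
    unfolding h_mod[of T] B_def
    by (rule member_le_sum[where f="\<lambda>t. \<bar>h t\<bar>"]) (use \<open>0 < p\<close> in auto)
  then have "(\<lambda>T. h T / real T) \<longlonglongrightarrow> 0"
    by (intro Lim_null_comparison[OF _ lim_const_over_n[of B]] always_eventually allI)
      (simp add: divide_right_mono)
  then have "(\<lambda>T. s / real p + h T / real T) \<longlonglongrightarrow> s / real p + 0"
    by (intro tendsto_add tendsto_const)
  moreover have "\<forall>\<^sub>F T in sequentially. s / real p + h T / real T = (\<Sum>t<T. f t) / real T"
    unfolding eventually_sequentially
    by (intro exI[of _ 1] allI impI) (use \<open>0 < p\<close> in \<open>simp add: h_def field_simps\<close>)
  ultimately show ?thesis unfolding s_def by (simp add: Lim_transform_eventually)
qed

definition frame_schedule :: "int \<Rightarrow> int \<Rightarrow> (nat \<Rightarrow> 'l set) \<Rightarrow> 'l \<Rightarrow> int \<Rightarrow> bool" where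
  "frame_schedule TF c g l t \<longleftrightarrow> 0 \<le> t \<and> t mod TF < TF - c \<and> l \<in> g (nat (t div TF))"

lemma frame_schedule_slot:
  assumes "0 < TF" "0 \<le> i" "i < TF"
  shows "frame_schedule TF c g l (int k * TF + i) \<longleftrightarrow> i < TF - c \<and> l \<in> g k"
proof -
  have "(int k * TF + i) div TF = int k" "(int k * TF + i) mod TF = i"
    using assms by (simp_all add: div_pos_pos_trivial mod_pos_pos_trivial)
  then show ?thesis using assms unfolding frame_schedule_def by simp
qed

lemma frame_schedule_framed:
  assumes "character I D + 1 \<le> TF"
  shows "framed_schedule I D TF (frame_schedule TF (character I D) g)"
  using assms character_nonneg[of I D]
  unfolding framed_schedule_def by (auto simp: frame_schedule_slot) (auto simp: frame_schedule_def)

text \<open>The last \<open>D\<^sup>*\<close> slots of every frame are silent, so an offset of size at most \<open>D\<^sup>*\<close>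
  from an active slot can only hit an active slot of the same frame.\<close>

lemma frame_schedule_collision_free:
  assumes "character I D + 1 \<le> TF" and independent: "\<And>k. independent_set I (g k)"
  shows "collision_free I D (frame_schedule TF (character I D) g)"
  unfolding collision_free_def
proof (intro allI impI notI)
  fix l t
  define c where "c = character I D"
  have "0 \<le> c" "c < TF" using assms(1) character_nonneg[of I D] unfolding c_def by linarith+
  assume "frame_schedule TF (character I D) g l t"
    and "collision I D (frame_schedule TF (character I D) g) l t"
  then obtain \<phi> where \<phi>: "\<phi> \<in> I l" and hit: "\<forall>l'\<in>\<phi>. frame_schedule TF c g l' (t + D l l')"
    and "frame_schedule TF c g l t"
    unfolding collision_def c_def by blast
  define q where "q = t div TF"
  define r where "r = t mod TF"
  have t: "t = q * TF + r" and "0 \<le> r" "r < TF - c" "l \<in> g (nat q)"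
    using \<open>frame_schedule TF c g l t\<close> \<open>0 \<le> c\<close> \<open>c < TF\<close> unfolding q_def r_def frame_schedule_def by (auto simp: pos_mod_sign)
  have "\<phi> \<subseteq> g (nat q)"
  proof
    fix l' assume "l' \<in> \<phi>"
    then have bound: "\<bar>D l l'\<bar> \<le> c" and l': "frame_schedule TF c g l' (t + D l l')"
      using abs_offset_le_character[of \<phi> I l l' D] \<phi> hit unfolding c_def by auto
    show "l' \<in> g (nat q)"
    proof (cases "0 \<le> r + D l l'")
      case True
      then have "(t + D l l') div TF = q"
        using t bound \<open>r < TF - c\<close> by (simp add: div_add_self2 div_pos_pos_trivial add.assoc)
      then show ?thesis using l' unfolding frame_schedule_def by simp
    next
      case False
      have previous_frame: "t + D l l' = (q - 1) * TF + (TF + r + D l l')"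
        using t by (simp add: algebra_simps)
      have "(t + D l l') mod TF = TF + r + D l l'"
        unfolding previous_frame using False bound \<open>0 \<le> r\<close> \<open>r < TF - c\<close> by (simp add: mod_pos_pos_trivial)
      then have "r + D l l' < - c" using l' unfolding frame_schedule_def by simp
      then show ?thesis using bound \<open>0 \<le> r\<close> by linarith
    qed
  qed
  then show False using independent[of "nat q"] \<open>l \<in> g (nat q)\<close> \<phi> unfolding independent_set_def by blast
qed

lemma frame_schedule_rate_vector:
  assumes TF: "character I D + 1 \<le> TF" and independent: "\<And>k. independent_set I (g k)"
    and "0 < P" and periodic: "\<And>k. g (k + P) = g k"
  shows "is_rate_vector I D (frame_schedule TF (character I D) g)
           (\<lambda>l. (1 - real_of_int (character I D) / real_of_int TF) * frequency g P l)"
  unfolding is_rate_vector_def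
proof
  fix l
  let ?S = "frame_schedule TF (character I D) g"
  have "0 < TF" using TF character_nonneg[of I D] by linarith
  have F: "framed_schedule I D TF ?S" using TF by (rule frame_schedule_framed)
  have CF: "collision_free I D ?S" using TF independent by (rule frame_schedule_collision_free)
  define f where "f t = (if ?S l (int t) then 1 else 0 :: real)" for t
  have "f (t + P * nat TF) = f t" for t
  proof -
    have "int (t + P * nat TF) = int t + int P * TF" using \<open>0 < TF\<close> by simp
    moreover have "(int t + int P * TF) mod TF = int t mod TF" by simp
    moreover have "nat ((int t + int P * TF) div TF) = nat (int t div TF) + P"
      using \<open>0 < TF\<close> by (simp add: nat_add_distrib pos_imp_zdiv_nonneg_iff)
    ultimately show ?thesis unfolding f_def frame_schedule_def by (simp add: periodic)
  qed
  then have "(\<lambda>T. (\<Sum>t<T. f t) / real T) \<longlonglongrightarrow> (\<Sum>t<P * nat TF. f t) / real (P * nat TF)"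
    using \<open>0 < P\<close> \<open>0 < TF\<close> by (intro periodic_avg_tendsto) auto
  moreover have "{l. ?S l (int k * TF)} = g k" for k
    using frame_schedule_slot[OF \<open>0 < TF\<close>, of 0 "character I D" g _ k] TF character_nonneg[of I D]
    by auto
  ultimately show "avg_rate I D ?S l \<longlonglongrightarrow> (1 - real_of_int (character I D) / real_of_int TF) * frequency g P l"
    using framed_avg_rate_after_frames[OF F CF, of l P]
    unfolding collision_free_avg_rate[OF CF] f_def by simp
qed

lemma frequency_le_one: "frequency g K l \<le> 1"
proof -
  have "(\<Sum>k<K. if l \<in> g k then 1 else 0) \<le> (\<Sum>k<K. 1 :: real)" by (intro sum_mono) auto
  then show ?thesis unfolding frequency_def by (cases "K = 0") (simp_all add: divide_le_eq_1)
qed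

lemma frequency_cycle:
  "frequency (\<lambda>k. xs ! (k mod length xs)) (length xs) l
     = (\<Sum>A\<leftarrow>xs. if l \<in> A then 1 else 0) / real (length xs)"
  unfolding frequency_def by (simp add: sum_list_sum_nth atLeast0LessThan)

lemma inj_indicator_vec: "inj indicator_vec"
proof
  fix A B :: "'l::finite set" assume "indicator_vec A = indicator_vec B"
  then have coordinates: "indicator_vec A $ l = indicator_vec B $ l" for l by simp
  show "A = B"
  proof (rule set_eqI)
    fix l show "l \<in> A \<longleftrightarrow> l \<in> B"
      using coordinates[of l] unfolding indicator_vec_def by (simp split: if_splits)
  qed
qed

lemma rate_region_weights:
  assumes "R \<in> rate_region I"
  obtains w where "\<And>A. independent_set I A \<Longrightarrow> 0 \<le> w A"
    and "(\<Sum>A | independent_set I A. w A) = 1"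
    and "\<And>l. R $ l = (\<Sum>A | independent_set I A. w A * (if l \<in> A then 1 else 0))"
proof -
  let ?\<A> = "{A. independent_set I A}"
  have vertices: "{indicator_vec A | A. independent_set I A} = indicator_vec ` ?\<A>" by blast
  have inj: "inj_on indicator_vec ?\<A>" using inj_indicator_vec by (rule inj_on_subset) simp
  obtain u where u0: "\<And>v. v \<in> indicator_vec ` ?\<A> \<Longrightarrow> 0 \<le> u v"
    and u1: "(\<Sum>v\<in>indicator_vec ` ?\<A>. u v) = 1"
    and uR: "(\<Sum>v\<in>indicator_vec ` ?\<A>. u v *\<^sub>R v) = R"
    using assms unfolding rate_region_def vertices convex_hull_finite[OF finite_imageI[OF finite]]
    by blast
  show ?thesis
  proof (rule that[of "u \<circ> indicator_vec"])
    show "0 \<le> (u \<circ> indicator_vec) A" if "independent_set I A" for A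
      using u0 that by simp
    show "(\<Sum>A\<in>?\<A>. (u \<circ> indicator_vec) A) = 1"
      using u1 by (simp add: sum.reindex[OF inj])
    show "R $ l = (\<Sum>A\<in>?\<A>. (u \<circ> indicator_vec) A * (if l \<in> A then 1 else 0))" for l
      unfolding uR[symmetric] by (simp add: sum.reindex[OF inj]) (simp add: indicator_vec_def)
  qed
qed

lemma sum_list_concat_replicate:
  fixes h :: "'a \<Rightarrow> real"
  shows "(\<Sum>x\<leftarrow>concat (map (\<lambda>A. replicate (n A) A) As). h x) = (\<Sum>A\<leftarrow>As. real (n A) * h A)"
  by (induction As) (simp_all add: sum_list_replicate)

lemma list_with_multiplicities:
  fixes n :: "'a \<Rightarrow> nat"
  assumes "finite \<A>" "(\<Sum>A\<in>\<A>. n A) \<le> N"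
  obtains xs where "length xs = N" "set xs \<subseteq> insert z \<A>"
    and "\<And>h :: 'a \<Rightarrow> real. (\<Sum>x\<leftarrow>xs. h x) = (\<Sum>A\<in>\<A>. real (n A) * h A) + real (N - (\<Sum>A\<in>\<A>. n A)) * h z"
proof -
  obtain As where As: "distinct As" "set As = \<A>" using finite_distinct_list[OF assms(1)] by blast
  define ys where "ys = concat (map (\<lambda>A. replicate (n A) A) As)"
  have ys_sum: "(\<Sum>x\<leftarrow>ys. h x) = (\<Sum>A\<in>\<A>. real (n A) * h A)" for h :: "'a \<Rightarrow> real"
    unfolding ys_def sum_list_concat_replicate using As by (simp add: sum_list_distinct_conv_sum_set)
  have "length ys = (\<Sum>A\<in>\<A>. n A)"
    using ys_sum[of "\<lambda>_. 1"] by (simp add: sum_list_triv flip: of_nat_sum)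
  then show ?thesis
    using assms(2) As ys_sum by (intro that[of "ys @ replicate (N - length ys) z"])
      (auto simp: ys_def sum_list_replicate)
qed

text \<open>Rounding the weights of a convex combination of independent sets down to multiples
  of \<open>1/N\<close> loses at most \<open>1/N\<close> per independent set; the leftover positions get the
  (independent) empty set.\<close>

lemma rate_region_approx_by_list:
  fixes I :: "'l::finite \<Rightarrow> 'l set set"
  assumes "R \<in> rate_region I" "0 < N"
  obtains xs where "length xs = N" "\<And>A. A \<in> set xs \<Longrightarrow> independent_set I A"
    and "\<And>l. R $ l - real (card {A. independent_set I A}) / real N
              \<le> (\<Sum>A\<leftarrow>xs. if l \<in> A then 1 else 0) / real N"
proof -
  let ?\<A> = "{A. independent_set I A}"
  obtain w where w0: "\<And>A. A \<in> ?\<A> \<Longrightarrow> 0 \<le> w A" and w1: "(\<Sum>A\<in>?\<A>. w A) = 1"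
    and R: "\<And>l. R $ l = (\<Sum>A\<in>?\<A>. w A * (if l \<in> A then 1 else 0))"
    using rate_region_weights[OF assms(1)] by auto
  define n where "n A = nat \<lfloor>w A * real N\<rfloor>" for A
  have n: "real (n A) \<le> w A * real N" "w A * real N - 1 \<le> real (n A)" if "A \<in> ?\<A>" for A
  proof -
    have "real (n A) = real_of_int \<lfloor>w A * real N\<rfloor>" using w0[OF that] unfolding n_def by simp
    then show "real (n A) \<le> w A * real N" "w A * real N - 1 \<le> real (n A)" by linarith+
  qed
  have "real (\<Sum>A\<in>?\<A>. n A) \<le> (\<Sum>A\<in>?\<A>. w A * real N)"
    unfolding of_nat_sum using n(1) by (intro sum_mono) auto
  then have "(\<Sum>A\<in>?\<A>. n A) \<le> N" by (simp add: w1 flip: sum_distrib_right of_nat_sum)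
  then obtain xs where "length xs = N" "set xs \<subseteq> insert {} ?\<A>"
    and xs_sum: "\<And>h :: 'l set \<Rightarrow> real. (\<Sum>A\<leftarrow>xs. h A)
        = (\<Sum>A\<in>?\<A>. real (n A) * h A) + real (N - (\<Sum>A\<in>?\<A>. n A)) * h {}"
    using list_with_multiplicities[OF finite] by blast
  moreover have "independent_set I A" if "A \<in> set xs" for A
    using that \<open>set xs \<subseteq> insert {} ?\<A>\<close> by (auto simp: independent_set_def)
  moreover have "R $ l - real (card ?\<A>) / real N \<le> (\<Sum>A\<leftarrow>xs. if l \<in> A then 1 else 0) / real N" for l
  proof -
    have "(\<Sum>A\<in>?\<A>. if l \<in> A then 1 else 0) \<le> (\<Sum>A\<in>?\<A>. 1 :: real)" by (intro sum_mono) auto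
    then have "real N * R $ l - real (card ?\<A>)
        \<le> (\<Sum>A\<in>?\<A>. (w A * real N - 1) * (if l \<in> A then 1 else 0))"
      unfolding R by (simp add: algebra_simps sum_subtractf sum_distrib_left)
    also have "\<dots> \<le> (\<Sum>A\<in>?\<A>. real (n A) * (if l \<in> A then 1 else 0))"
      using n(2) by (intro sum_mono) auto
    also have "\<dots> = (\<Sum>A\<leftarrow>xs. if l \<in> A then 1 else 0)"
      by (simp add: xs_sum)
    finally have "(real N * R $ l - real (card ?\<A>)) / real N \<le> (\<Sum>A\<leftarrow>xs. if l \<in> A then 1 else 0) / real N"
      by (rule divide_right_mono) simp
    then show ?thesis using \<open>0 < N\<close> by (simp add: diff_divide_distrib)
  qed
  ultimately show ?thesis using that by blast
qed

lemma rate_region_approx_by_periodic_sets: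
  fixes I :: "'l::finite \<Rightarrow> 'l set set"
  assumes "R \<in> rate_region I" "0 < \<epsilon>"
  obtains P g where "0 < P" "\<And>k. g (k + P) = g k" "\<And>k. independent_set I (g k)"
    and "\<And>l. R $ l - \<epsilon> \<le> frequency g P l"
proof -
  define m where "m = real (card {A. independent_set I A})"
  define N where "N = nat \<lceil>m / \<epsilon>\<rceil> + 1"
  have "0 < N" unfolding N_def by simp
  have "m / \<epsilon> \<le> real N" unfolding N_def by linarith
  then have "m / real N \<le> \<epsilon>" using \<open>0 < \<epsilon>\<close> \<open>0 < N\<close> by (simp add: field_simps)
  obtain xs where "length xs = N" and xs_independent: "\<And>A. A \<in> set xs \<Longrightarrow> independent_set I A"
    and xs_freq: "\<And>l. R $ l - m / real N \<le> (\<Sum>A\<leftarrow>xs. if l \<in> A then 1 else 0) / real N"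
    using rate_region_approx_by_list[OF assms(1) \<open>0 < N\<close>] unfolding m_def by blast
  define g where "g k = xs ! (k mod N)" for k
  show ?thesis
  proof (rule that[of N g])
    show "g (k + N) = g k" for k unfolding g_def by simp
    show "independent_set I (g k)" for k
      unfolding g_def using \<open>0 < N\<close> \<open>length xs = N\<close> by (intro xs_independent) simp
    show "R $ l - \<epsilon> \<le> frequency g N l" for l
      using frequency_cycle[of xs l] xs_freq[of l] \<open>m / real N \<le> \<epsilon>\<close>
      unfolding g_def \<open>length xs = N\<close> by linarith
  qed (rule \<open>0 < N\<close>)
qed

lemma exists_frame_length:
  fixes c :: int and \<delta> :: real
  assumes "0 \<le> c" "0 < \<delta>"
  obtains TF where "c + 1 \<le> TF" "real_of_int c / real_of_int TF \<le> \<delta>"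
proof
  define TF where "TF = c + 1 + \<lceil>real_of_int c / \<delta>\<rceil>"
  have "0 \<le> real_of_int c / \<delta>" using assms by simp
  then show "c + 1 \<le> TF" unfolding TF_def by linarith
  have "real_of_int TF = real_of_int c + 1 + real_of_int \<lceil>real_of_int c / \<delta>\<rceil>"
    unfolding TF_def by simp
  then have "real_of_int c / \<delta> \<le> real_of_int TF"
    using \<open>0 \<le> c\<close> le_of_int_ceiling[of "real_of_int c / \<delta>"] by linarith
  then show "real_of_int c / real_of_int TF \<le> \<delta>"
    using assms \<open>c + 1 \<le> TF\<close> by (simp add: field_simps)
qed

lemma rate_region_approx_by_framed_schedule:
  assumes "R \<in> rate_region I" "0 < \<epsilon>"
  shows "\<exists>TF S RS. framed_schedule I D TF S \<and> collision_free I D S \<and> is_rate_vector I D S RS \<and>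
           (\<forall>l. R $ l - \<epsilon> \<le> RS l)"
proof -
  obtain P g where "0 < P" "\<And>k. g (k + P) = g k" and independent: "\<And>k. independent_set I (g k)"
    and freq: "\<And>l. R $ l - \<epsilon> / 2 \<le> frequency g P l"
    using rate_region_approx_by_periodic_sets[OF assms(1), of "\<epsilon> / 2"] \<open>0 < \<epsilon>\<close> by auto
  obtain TF where TF: "character I D + 1 \<le> TF"
    and loss: "real_of_int (character I D) / real_of_int TF \<le> \<epsilon> / 2"
    using exists_frame_length[OF character_nonneg, of "\<epsilon> / 2" I D] \<open>0 < \<epsilon>\<close> by auto
  define q where "q = real_of_int (character I D) / real_of_int TF"
  have "R $ l - \<epsilon> \<le> (1 - q) * frequency g P l" for l
  proof -
    have "0 \<le> q" unfolding q_def using TF character_nonneg[of I D] by simp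
    then have "q * frequency g P l \<le> q" by (rule mult_left_le[OF frequency_le_one])
    then show ?thesis using freq[of l] loss[folded q_def] by (simp add: left_diff_distrib)
  qed
  then show ?thesis
    using frame_schedule_framed[OF TF] frame_schedule_collision_free[where g=g, OF TF independent]
      frame_schedule_rate_vector[where g=g, OF TF independent \<open>0 < P\<close> \<open>\<And>k. g (k + P) = g k\<close>]
    unfolding q_def by blast
qed

theorem theorem3:
  fixes I :: "'l::finite \<Rightarrow> 'l set set" and D :: "'l \<Rightarrow> 'l \<Rightarrow> int"
  assumes "network I"
  shows "(\<forall>TF S R. framed_schedule I D TF S \<and> TF \<ge> 3 * character I D + 1 \<and>
             collision_free I D S \<and> is_rate_vector I D S R \<longrightarrow>
             (\<chi> l. R l) \<in> (\<lambda>x. (1 - real_of_int (character I D) / real_of_int TF) *\<^sub>R x) ` rate_region I \<and>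
             (\<chi> l. R l) \<in> rate_region I)
       \<and> (\<forall>R \<in> rate_region I. \<forall>\<epsilon>>0. \<exists>TF S RS.
             framed_schedule I D TF S \<and> collision_free I D S \<and> is_rate_vector I D S RS \<and>
             (\<forall>l. RS l \<ge> R $ l - \<epsilon>))"
proof -
  have "(\<chi> l. R l) \<in> (\<lambda>x. (1 - real_of_int (character I D) / real_of_int TF) *\<^sub>R x) ` rate_region I \<and>
        (\<chi> l. R l) \<in> rate_region I"
    if "framed_schedule I D TF S" "3 * character I D + 1 \<le> TF"
      "collision_free I D S" "is_rate_vector I D S R" for TF S R
  proof -
    have "(\<chi> l. R l) \<in> (\<lambda>x. (1 - real_of_int (character I D) / real_of_int TF) *\<^sub>R x) ` rate_region I"
      using framed_rate_vector_in_scaled_rate_region[OF that] .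
    moreover have "(\<lambda>x. (1 - real_of_int (character I D) / real_of_int TF) *\<^sub>R x) ` rate_region I
        \<subseteq> rate_region I"
      using that(2) character_nonneg[of I D] by (intro scaled_rate_region_subset) simp_all
    ultimately show ?thesis by blast
  qed
  then show ?thesis using rate_region_approx_by_framed_schedule by blast
qed

end
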